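(* Let $W$ be a weakly symmetric discrete memoryless channel with input alphabet $\mathbb{F}_q$, with uniformly distributed input. Let $x\in\mathbb{F}_q$ be the input symbol sent, let $y$ be the corresponding (random) output, and let $\pi=\pi_y$ be the APP vector. Then $$\mathbb{E}_y(\pi(x))=\mathbb{E}_y(\|\pi\|^2),\qquad\text{where }\|\pi\|^2=\sum_{\alpha\in\mathbb{F}_q}\pi(\alpha)^2.$$
   Context: A discrete memoryless channel with transition probabilities $W(y|x)$, $x\in\mathbb{F}_q$, $y\in\mathcal{Y}$ (finite), is weakly symmetric if $\mathcal{Y}$ admits a partition $Y_1\cup\dots\cup Y_r$ such that each submatrix $(W(y|x))_{x\in\mathbb{F}_q,y\in Y_i}$ has all its rows permutations of each other and all its columns permutations of each other. With uniform input, the APP vector of output $y$ is $\pi_y(\alpha)=\mathrm{prob}(x=\alpha\mid y)=W(y|\alpha)/\sum_\beta W(y|\beta)$. The expectation $\mathbb{E}_y$ is over $y$ distributed according to $W(\cdot|x)$. *)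

theory Defs
  imports Main "HOL-Library.Disjoint_Sets" Complex_Main
begin

text \<open>A discrete memoryless channel with input alphabet 'a and finite output alphabet 'b,
  given by transition probabilities W x y = W(y|x).\<close>
definition dmc :: "('a::finite \<Rightarrow> 'b::finite \<Rightarrow> real) \<Rightarrow> bool" where
  "dmc W \<longleftrightarrow> (\<forall>x y. 0 \<le> W x y) \<and> (\<forall>x. (\<Sum>y\<in>UNIV. W x y) = 1)"

definition weakly_symmetric :: "('a::finite \<Rightarrow> 'b::finite \<Rightarrow> real) \<Rightarrow> bool" where
  "weakly_symmetric W \<longleftrightarrow>
     (\<exists>P. partition_on (UNIV :: 'b set) P \<and>
        (\<forall>B\<in>P.
           (\<forall>x x'. \<exists>\<sigma>. bij_betw \<sigma> B B \<and> (\<forall>y\<in>B. W x' y = W x (\<sigma> y))) \<and>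
           (\<forall>y\<in>B. \<forall>y'\<in>B. \<exists>\<tau>. bij \<tau> \<and> (\<forall>x. W x y' = W (\<tau> x) y))))"

text \<open>APP vector of output y under uniform input: pi_y(alpha) = W(y|alpha) / sum_beta W(y|beta).\<close>
definition app :: "('a::finite \<Rightarrow> 'b \<Rightarrow> real) \<Rightarrow> 'b \<Rightarrow> 'a \<Rightarrow> real" where
  "app W y \<alpha> = W \<alpha> y / (\<Sum>\<beta>\<in>UNIV. W \<beta> y)"

definition exp_out :: "('a \<Rightarrow> 'b::finite \<Rightarrow> real) \<Rightarrow> 'a \<Rightarrow> ('b \<Rightarrow> real) \<Rightarrow> real" where
  "exp_out W x f = (\<Sum>y\<in>UNIV. W x y * f y)"

end

theory Submission
  imports Defs
begin

text \<open>On a block B of a weakly symmetric channel every column has the same sum S and the same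
  sum of squares Q, and every row restricted to B has the same sum R and sum of squares T.
  Counting the entries of the block by rows and by columns gives q R = |B| S and q T = |B| Q,
  so on B both expectations equal |B| Q / (q S), and summing over the blocks gives the claim.
  The rows of W need not sum to 1 for this.\<close>

definition rows_permuted :: "('a \<Rightarrow> 'b \<Rightarrow> real) \<Rightarrow> 'b set \<Rightarrow> bool" where
  "rows_permuted W B \<longleftrightarrow> (\<forall>x x'. \<exists>\<sigma>. bij_betw \<sigma> B B \<and> (\<forall>y\<in>B. W x' y = W x (\<sigma> y)))"

definition columns_permuted :: "('a \<Rightarrow> 'b \<Rightarrow> real) \<Rightarrow> 'b set \<Rightarrow> bool" where
  "columns_permuted W B \<longleftrightarrow> (\<forall>y\<in>B. \<forall>y'\<in>B. \<exists>\<tau>. bij \<tau> \<and> (\<forall>x. W x y' = W (\<tau> x) y))"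

lemma weakly_symmetric_iff_blocks:
  "weakly_symmetric W \<longleftrightarrow>
     (\<exists>P. partition_on UNIV P \<and> (\<forall>B\<in>P. rows_permuted W B \<and> columns_permuted W B))"
  unfolding weakly_symmetric_def rows_permuted_def columns_permuted_def by (rule refl)

lemma rows_permuted_sum_eq:
  assumes "rows_permuted W B"
  shows "(\<Sum>y\<in>B. f (W x' y)) = (\<Sum>y\<in>B. f (W x y))"
proof -
  obtain \<sigma> where \<sigma>: "bij_betw \<sigma> B B" "\<forall>y\<in>B. W x' y = W x (\<sigma> y)"
    using assms unfolding rows_permuted_def by blast
  have "(\<Sum>y\<in>B. f (W x' y)) = (\<Sum>y\<in>B. f (W x (\<sigma> y)))"
    using \<sigma>(2) by (intro sum.cong) auto
  also have "\<dots> = (\<Sum>y\<in>B. f (W x y))"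
    using sum.reindex_bij_betw[OF \<sigma>(1)] .
  finally show ?thesis .
qed

lemma columns_permuted_sum_eq:
  assumes "columns_permuted W B" and "y \<in> B" and "y' \<in> B"
  shows "(\<Sum>\<beta>\<in>UNIV. f (W \<beta> y')) = (\<Sum>\<beta>\<in>UNIV. f (W \<beta> y))"
proof -
  obtain \<tau> where \<tau>: "bij \<tau>" "\<forall>x. W x y' = W (\<tau> x) y"
    using assms unfolding columns_permuted_def by blast
  have "(\<Sum>\<beta>\<in>UNIV. f (W \<beta> y')) = (\<Sum>\<beta>\<in>UNIV. f (W (\<tau> \<beta>) y))"
    using \<tau>(2) by simp
  also have "\<dots> = (\<Sum>\<beta>\<in>UNIV. f (W \<beta> y))"
    using sum.reindex_bij_betw[of \<tau> UNIV UNIV] \<tau>(1) by (simp add: bij_def)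
  finally show ?thesis .
qed

lemma block_double_counting:
  fixes W :: "'a::finite \<Rightarrow> 'b \<Rightarrow> real"
  assumes "rows_permuted W B" "columns_permuted W B" "y0 \<in> B"
  shows "real (card (UNIV :: 'a set)) * (\<Sum>y\<in>B. f (W x y)) = real (card B) * (\<Sum>\<beta>\<in>UNIV. f (W \<beta> y0))"
proof -
  have "real (card (UNIV :: 'a set)) * (\<Sum>y\<in>B. f (W x y)) = (\<Sum>\<alpha>\<in>(UNIV :: 'a set). \<Sum>y\<in>B. f (W x y))"
    by simp
  also have "\<dots> = (\<Sum>\<alpha>\<in>UNIV. \<Sum>y\<in>B. f (W \<alpha> y))"
    by (intro sum.cong refl rows_permuted_sum_eq[OF assms(1)])
  also have "\<dots> = (\<Sum>y\<in>B. \<Sum>\<alpha>\<in>UNIV. f (W \<alpha> y))"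
    by (rule sum.swap)
  also have "\<dots> = (\<Sum>y\<in>B. \<Sum>\<beta>\<in>UNIV. f (W \<beta> y0))"
    by (rule sum.cong[OF refl]) (erule columns_permuted_sum_eq[OF assms(2,3)])
  also have "\<dots> = real (card B) * (\<Sum>\<beta>\<in>UNIV. f (W \<beta> y0))"
    by simp
  finally show ?thesis .
qed

lemma block_expectation_eq:
  fixes W :: "'a::finite \<Rightarrow> 'b \<Rightarrow> real"
  assumes rows: "rows_permuted W B" and cols: "columns_permuted W B" and "y0 \<in> B"
  shows "(\<Sum>y\<in>B. W x y * app W y x) = (\<Sum>y\<in>B. W x y * (\<Sum>\<alpha>\<in>UNIV. (app W y \<alpha>)\<^sup>2))"
proof -
  define q where "q = real (card (UNIV :: 'a set))"
  define S where "S = (\<Sum>\<beta>\<in>UNIV. W \<beta> y0)"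
  define Q where "Q = (\<Sum>\<beta>\<in>UNIV. (W \<beta> y0)\<^sup>2)"
  have "q > 0"
    unfolding q_def by (simp add: finite_UNIV_card_ge_0)
  have S: "(\<Sum>\<beta>\<in>UNIV. W \<beta> y) = S" if "y \<in> B" for y
    unfolding S_def using columns_permuted_sum_eq[OF cols \<open>y0 \<in> B\<close> that, of "\<lambda>t. t"] by simp
  have Q: "(\<Sum>\<beta>\<in>UNIV. (W \<beta> y)\<^sup>2) = Q" if "y \<in> B" for y
    unfolding Q_def using columns_permuted_sum_eq[OF cols \<open>y0 \<in> B\<close> that, of power2] by simp
  have R: "(\<Sum>y\<in>B. W x y) = real (card B) * S / q"
    using block_double_counting[OF assms, of "\<lambda>t. t"] \<open>q > 0\<close>
    unfolding q_def S_def by (simp add: eq_divide_eq mult.commute)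
  have T: "(\<Sum>y\<in>B. (W x y)\<^sup>2) = real (card B) * Q / q"
    using block_double_counting[OF assms, of power2] \<open>q > 0\<close>
    unfolding q_def Q_def by (simp add: eq_divide_eq mult.commute)
  have "(\<Sum>y\<in>B. W x y * app W y x) = (\<Sum>y\<in>B. (W x y)\<^sup>2) / S"
    using S by (simp add: app_def sum_divide_distrib power2_eq_square)
  also have "\<dots> = (\<Sum>y\<in>B. W x y) * Q / S\<^sup>2"
    unfolding R T by (simp add: power2_eq_square)
  also have "\<dots> = (\<Sum>y\<in>B. W x y * (Q / S\<^sup>2))"
    by (simp add: sum_distrib_right sum_divide_distrib)
  also have "\<dots> = (\<Sum>y\<in>B. W x y * (\<Sum>\<alpha>\<in>UNIV. (app W y \<alpha>)\<^sup>2))"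
  proof (rule sum.cong[OF refl])
    fix y assume "y \<in> B"
    have "(\<Sum>\<alpha>\<in>UNIV. (app W y \<alpha>)\<^sup>2) = (\<Sum>\<alpha>\<in>UNIV. (W \<alpha> y)\<^sup>2) / S\<^sup>2"
      unfolding app_def S[OF \<open>y \<in> B\<close>] power_divide by (rule sum_divide_distrib[symmetric])
    then show "W x y * (Q / S\<^sup>2) = W x y * (\<Sum>\<alpha>\<in>UNIV. (app W y \<alpha>)\<^sup>2)"
      using Q[OF \<open>y \<in> B\<close>] by simp
  qed
  finally show ?thesis .
qed

theorem lemma1:
  fixes W :: "'a::{field,finite} \<Rightarrow> 'b::finite \<Rightarrow> real" and x :: 'a
  assumes "dmc W" and "weakly_symmetric W"
  shows "exp_out W x (\<lambda>y. app W y x) = exp_out W x (\<lambda>y. \<Sum>\<alpha>\<in>UNIV. (app W y \<alpha>)\<^sup>2)"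
proof -
  obtain P where P: "partition_on UNIV P"
    and blocks: "\<And>B. B \<in> P \<Longrightarrow> rows_permuted W B \<and> columns_permuted W B"
    using assms(2) unfolding weakly_symmetric_iff_blocks by blast
  have blockwise: "(\<Sum>y\<in>B. W x y * app W y x) = (\<Sum>y\<in>B. W x y * (\<Sum>\<alpha>\<in>UNIV. (app W y \<alpha>)\<^sup>2))"
    if "B \<in> P" for B
  proof -
    have "B \<noteq> {}"
      using P \<open>B \<in> P\<close> by (auto simp: partition_on_def)
    then obtain y0 where "y0 \<in> B"
      by blast
    from blocks[OF \<open>B \<in> P\<close>] show ?thesis
      by (intro block_expectation_eq[OF _ _ \<open>y0 \<in> B\<close>]) simp_all
  qed
  have "exp_out W x (\<lambda>y. app W y x) = (\<Sum>B\<in>P. \<Sum>y\<in>B. W x y * app W y x)"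
    unfolding exp_out_def by (rule sum.partition[OF finite_UNIV P])
  also have "\<dots> = (\<Sum>B\<in>P. \<Sum>y\<in>B. W x y * (\<Sum>\<alpha>\<in>UNIV. (app W y \<alpha>)\<^sup>2))"
    using blockwise by (rule sum.cong[OF refl])
  also have "\<dots> = exp_out W x (\<lambda>y. \<Sum>\<alpha>\<in>UNIV. (app W y \<alpha>)\<^sup>2)"
    unfolding exp_out_def by (rule sum.partition[OF finite_UNIV P, symmetric])
  finally show ?thesis .
qed

end
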